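(* Let $B$ be an $M$-matrix with "property $c$" and $C$ an invertible $M$-matrix, and let $A=\begin{pmatrix}B&0\\0&C\end{pmatrix}$. Then $A^{\#}$ exists and is a Karamardian matrix.
   Context: An $M$-matrix is a matrix of the form $sI-D$ with $D\ge 0$ entrywise and $s\ge\rho(D)$ (spectral radius); it is invertible iff $s>\rho(D)$. An $M$-matrix $B$ has "property $c$" if it can be written $B=sI-D$ with $s>0$, $D\ge 0$, and $D/s$ semi-convergent (i.e. $\lim_{k\to\infty}(D/s)^k$ exists). The group inverse $A^{\#}$ is the unique $X$ with $AXA=A$, $XAX=X$, $AX=XA$. For $M\in\mathbb{R}^{n\times n}$ let $K_M=\mathbb{R}^n_+\cap R(M)$ and $K_M^*=\{y: x^Ty\ge 0\ \forall x\in K_M\}$ (one has $K_M^*=\mathbb{R}^n_++N(M^T)$, with interior $\{a+b: a>0,\ b\in N(M^T)\}$). For $q$, LCP$(M,K_M,q)$ is to find $x\in K_M$ with $Mx+q\in K_M^*$ and $x^T(Mx+q)=0$. $M$ is a Karamardian matrix if $K_M\ne\{0\}$ and there exists $d$ in the interior of $K_M^*$ such that both LCP$(M,K_M,0)$ and LCP$(M,K_M,d)$ have $x=0$ as their only solution. *)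

theory Defs
  imports "Jordan_Normal_Form.Spectral_Radius"
begin

definition nonneg_mat :: "real mat \<Rightarrow> bool" where
  "nonneg_mat D \<longleftrightarrow> (\<forall>i<dim_row D. \<forall>j<dim_col D. D $$ (i,j) \<ge> 0)"

definition nonneg_vec :: "real vec \<Rightarrow> bool" where
  "nonneg_vec x \<longleftrightarrow> (\<forall>i<dim_vec x. x $ i \<ge> 0)"

definition rho :: "real mat \<Rightarrow> real" where
  "rho D = spectral_radius (map_mat complex_of_real D)"

definition M_matrix :: "nat \<Rightarrow> real mat \<Rightarrow> bool" where
  "M_matrix n B \<longleftrightarrow> B \<in> carrier_mat n n \<and>
     (\<exists>s D. D \<in> carrier_mat n n \<and> nonneg_mat D \<and> s \<ge> rho D \<and>
            B = s \<cdot>\<^sub>m 1\<^sub>m n - D)"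

definition invertible_M_matrix :: "nat \<Rightarrow> real mat \<Rightarrow> bool" where
  "invertible_M_matrix n B \<longleftrightarrow> M_matrix n B \<and> invertible_mat B"

definition semi_convergent :: "nat \<Rightarrow> real mat \<Rightarrow> bool" where
  "semi_convergent n T \<longleftrightarrow> (\<forall>i<n. \<forall>j<n. convergent (\<lambda>k. (T ^\<^sub>m k) $$ (i,j)))"

definition property_c :: "nat \<Rightarrow> real mat \<Rightarrow> bool" where
  "property_c n B \<longleftrightarrow>
     (\<exists>s D. s > 0 \<and> D \<in> carrier_mat n n \<and> nonneg_mat D \<and>
            B = s \<cdot>\<^sub>m 1\<^sub>m n - D \<and> semi_convergent n ((1 / s) \<cdot>\<^sub>m D))"

definition group_inverse :: "real mat \<Rightarrow> real mat \<Rightarrow> bool" where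
  "group_inverse A X \<longleftrightarrow> X \<in> carrier_mat (dim_row A) (dim_row A) \<and>
     A * X * A = A \<and> X * A * X = X \<and> A * X = X * A"

definition range_mat :: "nat \<Rightarrow> real mat \<Rightarrow> real vec set" where
  "range_mat n M = {M *\<^sub>v x | x. x \<in> carrier_vec n}"

definition K_cone :: "nat \<Rightarrow> real mat \<Rightarrow> real vec set" where
  "K_cone n M = {x \<in> carrier_vec n. nonneg_vec x} \<inter> range_mat n M"

definition K_dual :: "nat \<Rightarrow> real mat \<Rightarrow> real vec set" where
  "K_dual n M = {y \<in> carrier_vec n. \<forall>x\<in>K_cone n M. x \<bullet> y \<ge> 0}"

definition interior_vec :: "nat \<Rightarrow> real vec set \<Rightarrow> real vec set" where
  "interior_vec n S = {d \<in> carrier_vec n. \<exists>e>0. \<forall>y\<in>carrier_vec n.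
        (\<forall>i<n. \<bar>y $ i - d $ i\<bar> < e) \<longrightarrow> y \<in> S}"

definition LCP_sol :: "nat \<Rightarrow> real mat \<Rightarrow> real vec \<Rightarrow> real vec \<Rightarrow> bool" where
  "LCP_sol n M q x \<longleftrightarrow> x \<in> K_cone n M \<and> M *\<^sub>v x + q \<in> K_dual n M \<and>
     x \<bullet> (M *\<^sub>v x + q) = 0"

definition Karamardian :: "nat \<Rightarrow> real mat \<Rightarrow> bool" where
  "Karamardian n M \<longleftrightarrow> M \<in> carrier_mat n n \<and> K_cone n M \<noteq> {0\<^sub>v n} \<and>
     (\<exists>d \<in> interior_vec n (K_dual n M).
        (\<forall>x. LCP_sol n M (0\<^sub>v n) x \<longrightarrow> x = 0\<^sub>v n) \<and>
        (\<forall>x. LCP_sol n M d x \<longrightarrow> x = 0\<^sub>v n))"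

end

theory Submission
  imports Defs
begin

(* Write B = s (1 - T1) with T1 >= 0 semiconvergent, and C = t 1 - E as (t + 1) (1 - T2) with
   T2 = (E + 1) / (t + 1) >= 0; since t 1 - E is invertible, T2 has spectral radius < 1, so its
   powers tend to 0.  Hence A = S (1 - T) for the positive diagonal matrix S = diag (s, t + 1),
   which commutes with the nonnegative semiconvergent matrix T = diag (T1, T2).  With
   Q = lim T^k, the matrix 1 - T + Q is invertible and A# = ((1 - T + Q)^-1 - Q) S^-1.
   Every x = A# u satisfies Q x = 0, and (1 - T)# y >= y for y >= 0 with Q y = 0; so
   x . A# x >= x . S^-1 x > 0 for 0 <> x >= 0 in R(A#), i.e. A# is strictly copositive on K_{A#}.  This makes both complementarity problems (q = 0 and q = (1,...,1))
   trivial, and K_{A#} <> 0 because Q vanishes on the columns of the C block, so the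
   corresponding unit vectors lie in R(A#). *)

lemma index_mult_mat_sum:
  assumes "A \<in> carrier_mat n n" "B \<in> carrier_mat n n" "i < n" "j < n"
  shows "(A * B) $$ (i,j) = (\<Sum>l<n. A $$ (i,l) * B $$ (l,j))"
  using assms by (simp add: scalar_prod_def lessThan_atLeast0)

lemma index_mult_mat_vec_sum:
  assumes "A \<in> carrier_mat n n" "v \<in> carrier_vec n" "i < n"
  shows "(A *\<^sub>v v) $ i = (\<Sum>l<n. A $$ (i,l) * v $ l)"
  using assms by (simp add: scalar_prod_def lessThan_atLeast0)

lemma mult_mat_vec_zero [simp]:
  "A \<in> carrier_mat nr nc \<Longrightarrow> A *\<^sub>v 0\<^sub>v nc = (0\<^sub>v nr :: 'a :: semiring_0 vec)"
  by (intro eq_vecI) (auto simp: scalar_prod_def)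

lemma zero_mult_mat_vec [simp]:
  "v \<in> carrier_vec nc \<Longrightarrow> 0\<^sub>m nr nc *\<^sub>v v = (0\<^sub>v nr :: 'a :: semiring_0 vec)"
  by (intro eq_vecI) (auto simp: scalar_prod_def)

lemma minus_zero_mat [simp]:
  "A \<in> carrier_mat nr nc \<Longrightarrow> A - 0\<^sub>m nr nc = (A :: 'a :: group_add mat)"
  by (intro eq_matI) auto

section \<open>Entrywise limits of matrix sequences\<close>

definition mat_tendsto :: "nat \<Rightarrow> (nat \<Rightarrow> real mat) \<Rightarrow> real mat \<Rightarrow> bool" where
  "mat_tendsto n F L \<longleftrightarrow> (\<forall>i<n. \<forall>j<n. (\<lambda>k. F k $$ (i,j)) \<longlonglongrightarrow> L $$ (i,j))"

lemma mat_tendsto_unique: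
  assumes "mat_tendsto n F L" "mat_tendsto n F L'"
    and "L \<in> carrier_mat n n" "L' \<in> carrier_mat n n"
  shows "L = L'"
proof (rule eq_matI)
  fix i j assume "i < dim_row L'" "j < dim_col L'"
  then show "L $$ (i,j) = L' $$ (i,j)"
    using assms unfolding mat_tendsto_def by (metis LIMSEQ_unique carrier_matD)
qed (use assms in auto)

lemma mat_tendsto_Suc:
  "mat_tendsto n F L \<Longrightarrow> mat_tendsto n (\<lambda>k. F (Suc k)) L"
  unfolding mat_tendsto_def by (auto intro: LIMSEQ_Suc)

lemma mat_tendsto_mult_right:
  assumes F: "\<And>k. F k \<in> carrier_mat n n" and M: "M \<in> carrier_mat n n"
    and L: "L \<in> carrier_mat n n" and lim: "mat_tendsto n F L"
  shows "mat_tendsto n (\<lambda>k. F k * M) (L * M)"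
  unfolding mat_tendsto_def
proof (intro allI impI)
  fix i j assume ij: "i < n" "j < n"
  show "(\<lambda>k. (F k * M) $$ (i,j)) \<longlonglongrightarrow> (L * M) $$ (i,j)"
    unfolding index_mult_mat_sum[OF F M ij] index_mult_mat_sum[OF L M ij]
    using lim ij unfolding mat_tendsto_def by (intro tendsto_intros) auto
qed

lemma mat_tendsto_mult_left:
  assumes F: "\<And>k. F k \<in> carrier_mat n n" and M: "M \<in> carrier_mat n n"
    and L: "L \<in> carrier_mat n n" and lim: "mat_tendsto n F L"
  shows "mat_tendsto n (\<lambda>k. M * F k) (M * L)"
  unfolding mat_tendsto_def
proof (intro allI impI)
  fix i j assume ij: "i < n" "j < n"
  show "(\<lambda>k. (M * F k) $$ (i,j)) \<longlonglongrightarrow> (M * L) $$ (i,j)"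
    unfolding index_mult_mat_sum[OF M F ij] index_mult_mat_sum[OF M L ij]
    using lim ij unfolding mat_tendsto_def by (intro tendsto_intros) auto
qed

lemma mat_tendsto_mult_vec:
  assumes F: "\<And>k. F k \<in> carrier_mat n n" and v: "v \<in> carrier_vec n"
    and L: "L \<in> carrier_mat n n" and lim: "mat_tendsto n F L" and i: "i < n"
  shows "(\<lambda>k. (F k *\<^sub>v v) $ i) \<longlonglongrightarrow> (L *\<^sub>v v) $ i"
  unfolding index_mult_mat_vec_sum[OF F v i] index_mult_mat_vec_sum[OF L v i]
  using lim i unfolding mat_tendsto_def by (intro tendsto_intros) auto

lemma nonneg_mat_mult:
  assumes "A \<in> carrier_mat n n" "B \<in> carrier_mat n n" "nonneg_mat A" "nonneg_mat B"
  shows "nonneg_mat (A * B)"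
  unfolding nonneg_mat_def
proof (intro allI impI)
  fix i j assume "i < dim_row (A * B)" "j < dim_col (A * B)"
  hence ij: "i < n" "j < n" using assms by auto
  show "0 \<le> (A * B) $$ (i,j)" unfolding index_mult_mat_sum[OF assms(1,2) ij]
    using assms ij by (intro sum_nonneg mult_nonneg_nonneg) (auto simp: nonneg_mat_def)
qed

lemma nonneg_mat_pow:
  assumes "A \<in> carrier_mat n n" "nonneg_mat A"
  shows "nonneg_mat (A ^\<^sub>m k)"
proof (induction k)
  case 0
  then show ?case by (auto simp: nonneg_mat_def)
next
  case (Suc k)
  then show ?case using nonneg_mat_mult[OF pow_carrier_mat[OF assms(1)] assms(1)] assms(2) by simp
qed

lemma nonneg_vec_mult_mat_vec:
  assumes "A \<in> carrier_mat n n" "v \<in> carrier_vec n" "nonneg_mat A" "nonneg_vec v"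
  shows "nonneg_vec (A *\<^sub>v v)"
  unfolding nonneg_vec_def
proof (intro allI impI)
  fix i assume "i < dim_vec (A *\<^sub>v v)"
  hence i: "i < n" using assms by auto
  show "0 \<le> (A *\<^sub>v v) $ i" unfolding index_mult_mat_vec_sum[OF assms(1,2) i]
    using assms i by (intro sum_nonneg mult_nonneg_nonneg) (auto simp: nonneg_mat_def nonneg_vec_def)
qed

section \<open>Group inverses and Karamardian matrices\<close>

lemma group_inverse_unique:
  assumes A: "A \<in> carrier_mat n n" and "group_inverse A X" "group_inverse A Y"
  shows "X = Y"
proof -
  have X: "X \<in> carrier_mat n n" and Y: "Y \<in> carrier_mat n n"
    and X1: "A * X * A = A" and X2: "X * A * X = X" and X3: "A * X = X * A"
    and Y1: "A * Y * A = A" and Y2: "Y * A * Y = Y" and Y3: "A * Y = Y * A"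
    using assms unfolding group_inverse_def by auto
  note assoc = assoc_mult_mat[of _ n n _ n _ n]
  have "X * A = X * (A * (Y * A))" using A Y Y1 by (simp add: assoc)
  also have "\<dots> = (X * A) * (A * Y)" using A X Y Y3 by (simp add: assoc)
  also have "\<dots> = (A * X * A) * Y" using A X Y X3 by (simp add: assoc)
  finally have XA: "X * A = A * Y" using X1 by simp
  have "X = (X * A) * X" using A X X2 by (simp add: assoc)
  also have "\<dots> = Y * (A * Y)" using A X Y XA X3 Y3 by (simp add: assoc)
  finally show ?thesis using A Y Y2 by (simp add: assoc)
qed

text \<open>Taking \<open>d\<close> to be the all-ones vector, both complementarity problems force
  \<open>x \<bullet> (M *\<^sub>v x) \<le> 0\<close>, which strict copositivity on \<open>K_M\<close> excludes unless \<open>x = 0\<close>.\<close>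

lemma Karamardian_if_strictly_copositive:
  assumes M: "M \<in> carrier_mat n n" and K: "K_cone n M \<noteq> {0\<^sub>v n}"
    and pos: "\<And>x. x \<in> K_cone n M \<Longrightarrow> x \<noteq> 0\<^sub>v n \<Longrightarrow> 0 < x \<bullet> (M *\<^sub>v x)"
  shows "Karamardian n M"
proof -
  define d :: "real vec" where "d = vec n (\<lambda>_. 1)"
  have d: "d \<in> carrier_vec n" unfolding d_def by simp
  have xd: "0 \<le> x \<bullet> d" if "x \<in> K_cone n M" for x
    using that unfolding K_cone_def d_def scalar_prod_def nonneg_vec_def by (auto intro!: sum_nonneg)
  have "d \<in> interior_vec n (K_dual n M)"
    unfolding interior_vec_def
  proof (intro CollectI conjI exI[of _ 1] ballI impI d)
    fix y :: "real vec" assume y: "y \<in> carrier_vec n" and near: "\<forall>i<n. \<bar>y $ i - d $ i\<bar> < 1"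
    have "0 \<le> y $ i" if "i < n" for i using near that unfolding d_def by force
    then show "y \<in> K_dual n M" unfolding K_dual_def using y
      by (auto simp: K_cone_def scalar_prod_def nonneg_vec_def intro!: sum_nonneg)
  qed simp
  moreover have "x = 0\<^sub>v n" if "LCP_sol n M q x" "q = 0\<^sub>v n \<or> q = d" for q x
  proof (rule ccontr)
    assume x0: "x \<noteq> 0\<^sub>v n"
    from that have xK: "x \<in> K_cone n M" and compl: "x \<bullet> (M *\<^sub>v x + q) = 0"
      unfolding LCP_sol_def by auto
    have x: "x \<in> carrier_vec n" and q: "q \<in> carrier_vec n"
      using xK that(2) d unfolding K_cone_def by auto
    have "x \<bullet> (M *\<^sub>v x + q) = x \<bullet> (M *\<^sub>v x) + x \<bullet> q"
      by (rule scalar_prod_add_distrib[OF x _ q]) (use M x in simp)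
    moreover have "0 \<le> x \<bullet> q" using that(2) xd[OF xK] x by auto
    ultimately show False using compl pos[OF xK x0] by linarith
  qed
  ultimately show ?thesis unfolding Karamardian_def using M K by blast
qed

section \<open>Nonnegative semiconvergent matrices\<close>

text \<open>If \<open>T *\<^sub>v z = z - y\<close> with \<open>T, y \<ge> 0\<close>, then \<open>T ^ (N+1) *\<^sub>v z = z - (y + T y + \<dots> + T ^ N y)\<close>.\<close>

lemma excessive_pow_bound:
  assumes T: "T \<in> carrier_mat n n" "nonneg_mat T" and z: "z \<in> carrier_vec n"
    and y: "y \<in> carrier_vec n" "nonneg_vec y" and Tz: "T *\<^sub>v z = z - y" and i: "i < n"
  shows "y $ i + (T ^\<^sub>m Suc N *\<^sub>v z) $ i \<le> z $ i"
proof (induction N)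
  case 0
  then show ?case using Tz i z y T by simp
next
  case (Suc N)
  have TN: "T ^\<^sub>m Suc N \<in> carrier_mat n n" by (rule pow_carrier_mat[OF T(1)])
  have "T ^\<^sub>m Suc (Suc N) *\<^sub>v z = T ^\<^sub>m Suc N *\<^sub>v (T *\<^sub>v z)"
    using assoc_mult_mat_vec[OF TN T(1) z] by simp
  also have "\<dots> = T ^\<^sub>m Suc N *\<^sub>v z - T ^\<^sub>m Suc N *\<^sub>v y"
    unfolding Tz by (rule mult_minus_distrib_mat_vec[OF TN z y(1)])
  finally have "T ^\<^sub>m Suc (Suc N) *\<^sub>v z = T ^\<^sub>m Suc N *\<^sub>v z - T ^\<^sub>m Suc N *\<^sub>v y" .
  moreover have "0 \<le> (T ^\<^sub>m Suc N *\<^sub>v y) $ i"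
    using nonneg_vec_mult_mat_vec[OF TN y(1) nonneg_mat_pow[OF T] y(2)] i TN
    unfolding nonneg_vec_def by (metis carrier_matD(1) dim_mult_mat_vec)
  ultimately show ?case using Suc i carrier_matD(1)[OF TN] by simp
qed

lemma inverse_mat_exists_if_det_nonzero:
  fixes A :: "'a :: field mat"
  assumes "A \<in> carrier_mat n n" "det A \<noteq> 0"
  shows "\<exists>B. B \<in> carrier_mat n n \<and> B * A = 1\<^sub>m n \<and> A * B = 1\<^sub>m n"
  using det_non_zero_imp_unit[OF assms, of "()"] unfolding Units_def ring_mat_def by auto

lemma pow_mat_commute:
  assumes "A \<in> carrier_mat n n" "M \<in> carrier_mat n n" "M * A = A * M"
  shows "M * A ^\<^sub>m k = A ^\<^sub>m k * M"
proof (induction k)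
  case 0
  then show ?case using assms by simp
next
  case (Suc k)
  note assoc = assoc_mult_mat[of _ n n _ n _ n]
  have "M * A ^\<^sub>m Suc k = (A ^\<^sub>m k * M) * A" using assms Suc by (simp add: assoc[symmetric])
  also have "\<dots> = A ^\<^sub>m Suc k * M" using assms by (simp add: assoc)
  finally show ?case .
qed

locale nonneg_semiconvergent =
  fixes n :: nat and T :: "real mat"
  assumes T_carrier: "T \<in> carrier_mat n n" and T_nonneg: "nonneg_mat T"
    and T_semi_convergent: "semi_convergent n T"
begin

definition T_lim :: "real mat" where
  "T_lim = mat n n (\<lambda>(i,j). lim (\<lambda>k. (T ^\<^sub>m k) $$ (i,j)))"

lemma T_lim_carrier: "T_lim \<in> carrier_mat n n"
  unfolding T_lim_def by simp

lemma pow_tendsto_T_lim: "mat_tendsto n (\<lambda>k. T ^\<^sub>m k) T_lim"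
  using T_semi_convergent
  unfolding semi_convergent_def mat_tendsto_def T_lim_def by (simp add: convergent_LIMSEQ_iff)

lemma T_lim_pow_column_zero:
  assumes "j < n" "\<And>i. i < n \<Longrightarrow> (\<lambda>k. (T ^\<^sub>m k) $$ (i,j)) \<longlonglongrightarrow> 0" "i < n"
  shows "T_lim $$ (i,j) = 0"
  using assms pow_tendsto_T_lim unfolding mat_tendsto_def by (metis LIMSEQ_unique)

lemma T_lim_mult_T: "T_lim * T = T_lim"
proof (rule mat_tendsto_unique)
  show "mat_tendsto n (\<lambda>k. T ^\<^sub>m Suc k) (T_lim * T)"
    using mat_tendsto_mult_right[OF pow_carrier_mat[OF T_carrier] T_carrier T_lim_carrier
        pow_tendsto_T_lim] by simp
  show "mat_tendsto n (\<lambda>k. T ^\<^sub>m Suc k) T_lim"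
    by (rule mat_tendsto_Suc[OF pow_tendsto_T_lim])
qed (use T_carrier T_lim_carrier in auto)

lemma commute_T_lim:
  assumes M: "M \<in> carrier_mat n n" and MT: "M * T = T * M"
  shows "M * T_lim = T_lim * M"
proof (rule mat_tendsto_unique)
  show "mat_tendsto n (\<lambda>k. M * T ^\<^sub>m k) (M * T_lim)"
    by (rule mat_tendsto_mult_left[OF pow_carrier_mat[OF T_carrier] M T_lim_carrier pow_tendsto_T_lim])
  show "mat_tendsto n (\<lambda>k. M * T ^\<^sub>m k) (T_lim * M)"
    using mat_tendsto_mult_right[OF pow_carrier_mat[OF T_carrier] M T_lim_carrier pow_tendsto_T_lim]
    by (simp add: pow_mat_commute[OF T_carrier M MT])
qed (use M T_lim_carrier in auto)

lemma T_mult_T_lim: "T * T_lim = T_lim"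
  using commute_T_lim[OF T_carrier refl] T_lim_mult_T by simp

lemma pow_mult_T_lim: "T ^\<^sub>m k * T_lim = T_lim"
proof (induction k)
  case 0
  then show ?case using T_carrier T_lim_carrier by simp
next
  case (Suc k)
  then show ?case using T_carrier T_lim_carrier
    by (simp add: assoc_mult_mat[of _ n n _ n _ n] T_mult_T_lim)
qed

lemma T_lim_idem: "T_lim * T_lim = T_lim"
  using mat_tendsto_unique[OF mat_tendsto_mult_right[OF pow_carrier_mat[OF T_carrier] T_lim_carrier
      T_lim_carrier pow_tendsto_T_lim]] T_lim_carrier
  by (simp add: pow_mult_T_lim mat_tendsto_def)

lemma T_lim_mult_id_minus_T: "T_lim * (1\<^sub>m n - T) = 0\<^sub>m n n"
  using T_carrier T_lim_carrier
  by (simp add: mult_minus_distrib_mat[OF T_lim_carrier one_carrier_mat T_carrier] T_lim_mult_T)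

lemma id_minus_T_mult_T_lim: "(1\<^sub>m n - T) * T_lim = 0\<^sub>m n n"
  using T_carrier T_lim_carrier
  by (simp add: minus_mult_distrib_mat[OF one_carrier_mat T_carrier T_lim_carrier] T_mult_T_lim)

lemma T_lim_mult_shifted: "T_lim * (1\<^sub>m n - T + T_lim) = T_lim"
  by (subst mult_add_distrib_mat[of _ n n])
    (use T_carrier T_lim_carrier in \<open>auto simp: T_lim_mult_id_minus_T T_lim_idem\<close>)

lemma shifted_mult_T_lim: "(1\<^sub>m n - T + T_lim) * T_lim = T_lim"
  by (subst add_mult_distrib_mat[of _ n n])
    (use T_carrier T_lim_carrier in \<open>auto simp: minus_carrier_mat id_minus_T_mult_T_lim T_lim_idem\<close>)

lemma shifted_mult_vec:
  assumes "v \<in> carrier_vec n"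
  shows "(1\<^sub>m n - T + T_lim) *\<^sub>v v = v - T *\<^sub>v v + T_lim *\<^sub>v v"
  using assms T_carrier T_lim_carrier
  by (subst add_mult_distrib_mat_vec[of _ n n])
    (simp_all add: minus_carrier_mat minus_mult_distrib_mat_vec[of _ n n])

text \<open>A vector killed by \<open>1 - T + T_lim\<close> is killed by \<open>T_lim\<close>, hence fixed by \<open>T\<close>, hence
  equal to its own limit \<open>T_lim *\<^sub>v v = 0\<close>.\<close>

lemma shifted_mult_vec_eq_0:
  assumes v: "v \<in> carrier_vec n" and z: "(1\<^sub>m n - T + T_lim) *\<^sub>v v = 0\<^sub>v n"
  shows "v = 0\<^sub>v n"
proof -
  have "T_lim *\<^sub>v v = (T_lim * (1\<^sub>m n - T + T_lim)) *\<^sub>v v" by (simp add: T_lim_mult_shifted)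
  also have "\<dots> = 0\<^sub>v n"
    using T_carrier T_lim_carrier v z by (simp add: assoc_mult_mat_vec[of _ n n _ n])
  finally have lim_v: "T_lim *\<^sub>v v = 0\<^sub>v n" .
  have diff: "v - T *\<^sub>v v = 0\<^sub>v n"
    using z shifted_mult_vec[OF v] lim_v v T_carrier by simp
  have fixed: "T *\<^sub>v v = v"
  proof (rule eq_vecI)
    fix i assume "i < dim_vec v"
    then show "(T *\<^sub>v v) $ i = v $ i"
      using arg_cong[OF diff, of "\<lambda>w. w $ i"] v T_carrier by simp
  qed (use T_carrier v in simp)
  have pow_fixed: "T ^\<^sub>m k *\<^sub>v v = v" for k
  proof (induction k)
    case (Suc k)
    then show ?case using T_carrier v fixed
      by (simp add: assoc_mult_mat_vec[OF pow_carrier_mat[OF T_carrier] T_carrier v])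
  qed (use T_carrier v in simp)
  show ?thesis
  proof (rule eq_vecI)
    fix i assume "i < dim_vec (0\<^sub>v n :: real vec)"
    hence i: "i < n" by simp
    have "(\<lambda>k. v $ i) \<longlonglongrightarrow> (T_lim *\<^sub>v v) $ i"
      using mat_tendsto_mult_vec[OF pow_carrier_mat[OF T_carrier] v T_lim_carrier pow_tendsto_T_lim i]
      by (simp add: pow_fixed)
    thus "v $ i = 0\<^sub>v n $ i" using i lim_v LIMSEQ_const_iff by auto
  qed (use v in simp)
qed

text \<open>As for the fundamental matrix of a Markov chain, subtracting \<open>T_lim\<close> from the inverse of
  \<open>1 - T + T_lim\<close> gives the group inverse \<open>P_sharp\<close> of \<open>1 - T\<close>.\<close>

definition fundamental :: "real mat" where
  "fundamental = (SOME W. W \<in> carrier_mat n n \<and> W * (1\<^sub>m n - T + T_lim) = 1\<^sub>m n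
                          \<and> (1\<^sub>m n - T + T_lim) * W = 1\<^sub>m n)"

lemma fundamental:
  "fundamental \<in> carrier_mat n n"
  "fundamental * (1\<^sub>m n - T + T_lim) = 1\<^sub>m n"
  "(1\<^sub>m n - T + T_lim) * fundamental = 1\<^sub>m n"
proof -
  have shifted: "1\<^sub>m n - T + T_lim \<in> carrier_mat n n" using T_carrier T_lim_carrier by simp
  have "det (1\<^sub>m n - T + T_lim) \<noteq> 0"
    using shifted_mult_vec_eq_0 det_0_iff_vec_prod_zero[OF shifted] by auto
  from someI_ex[OF inverse_mat_exists_if_det_nonzero[OF shifted this]]
  show "fundamental \<in> carrier_mat n n" "fundamental * (1\<^sub>m n - T + T_lim) = 1\<^sub>m n"
    "(1\<^sub>m n - T + T_lim) * fundamental = 1\<^sub>m n"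
    unfolding fundamental_def by auto
qed

lemma id_minus_T_eq: "1\<^sub>m n - T = (1\<^sub>m n - T + T_lim) - T_lim"
  using T_carrier T_lim_carrier by (intro eq_matI) auto

lemma T_lim_mult_fundamental: "T_lim * fundamental = T_lim"
proof -
  have "T_lim * fundamental = T_lim * (1\<^sub>m n - T + T_lim) * fundamental"
    by (simp add: T_lim_mult_shifted)
  also have "\<dots> = T_lim"
    using T_carrier T_lim_carrier fundamental by (simp add: assoc_mult_mat[of _ n n _ n _ n])
  finally show ?thesis .
qed

lemma fundamental_mult_T_lim: "fundamental * T_lim = T_lim"
proof -
  have "fundamental * T_lim = fundamental * ((1\<^sub>m n - T + T_lim) * T_lim)"
    by (simp add: shifted_mult_T_lim)
  also have "\<dots> = T_lim"
    using T_carrier T_lim_carrier fundamental by (simp add: assoc_mult_mat[of _ n n _ n _ n, symmetric])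
  finally show ?thesis .
qed

definition P_sharp :: "real mat" where
  "P_sharp = fundamental - T_lim"

lemma P_sharp_carrier: "P_sharp \<in> carrier_mat n n"
  unfolding P_sharp_def using fundamental T_lim_carrier by (simp add: minus_carrier_mat)

lemma id_minus_T_mult_P_sharp: "(1\<^sub>m n - T) * P_sharp = 1\<^sub>m n - T_lim"
proof -
  have "(1\<^sub>m n - T) * P_sharp = (1\<^sub>m n - T) * fundamental - (1\<^sub>m n - T) * T_lim"
    unfolding P_sharp_def using T_carrier T_lim_carrier fundamental
    by (simp add: mult_minus_distrib_mat[of _ n n] minus_carrier_mat)
  also have "(1\<^sub>m n - T) * fundamental = 1\<^sub>m n - T_lim * fundamental"
    by (subst id_minus_T_eq, subst minus_mult_distrib_mat[of _ n n])
      (use T_carrier T_lim_carrier fundamental in auto)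
  also have "\<dots> - (1\<^sub>m n - T) * T_lim = 1\<^sub>m n - T_lim"
    using T_lim_carrier by (intro eq_matI) (auto simp: T_lim_mult_fundamental id_minus_T_mult_T_lim)
  finally show ?thesis .
qed

lemma P_sharp_mult_id_minus_T: "P_sharp * (1\<^sub>m n - T) = 1\<^sub>m n - T_lim"
proof -
  have "P_sharp * (1\<^sub>m n - T) = fundamental * (1\<^sub>m n - T) - T_lim * (1\<^sub>m n - T)"
    unfolding P_sharp_def
    by (rule minus_mult_distrib_mat[OF fundamental(1) T_lim_carrier minus_carrier_mat[OF T_carrier]])
  also have "fundamental * (1\<^sub>m n - T) = 1\<^sub>m n - fundamental * T_lim"
    by (subst id_minus_T_eq, subst mult_minus_distrib_mat[of _ n n])
      (use T_carrier T_lim_carrier fundamental in auto)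
  also have "\<dots> - T_lim * (1\<^sub>m n - T) = 1\<^sub>m n - T_lim"
    using T_lim_carrier by (intro eq_matI) (auto simp: fundamental_mult_T_lim T_lim_mult_id_minus_T)
  finally show ?thesis .
qed

lemma T_lim_mult_P_sharp: "T_lim * P_sharp = 0\<^sub>m n n"
  unfolding P_sharp_def using T_lim_carrier fundamental
  by (simp add: mult_minus_distrib_mat[of _ n n] T_lim_mult_fundamental T_lim_idem)

text \<open>\<open>z = fundamental *\<^sub>v y\<close> equals \<open>P_sharp *\<^sub>v y\<close> and solves \<open>T *\<^sub>v z = z - y\<close>, \<open>T_lim *\<^sub>v z = 0\<close>;
  letting \<open>N \<rightarrow> \<infinity>\<close> in \<open>excessive_pow_bound\<close> gives \<open>z \<ge> y\<close>.\<close>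

lemma le_P_sharp_mult_vec:
  assumes y: "y \<in> carrier_vec n" and y_nonneg: "nonneg_vec y"
    and lim_y: "T_lim *\<^sub>v y = 0\<^sub>v n" and i: "i < n"
  shows "y $ i \<le> (P_sharp *\<^sub>v y) $ i"
proof -
  define z where "z = fundamental *\<^sub>v y"
  have z: "z \<in> carrier_vec n" unfolding z_def using fundamental y by simp
  have "(1\<^sub>m n - T + T_lim) *\<^sub>v z = y"
    unfolding z_def using fundamental y T_carrier T_lim_carrier
    by (simp add: assoc_mult_mat_vec[of _ n n _ n, symmetric])
  moreover have lim_z: "T_lim *\<^sub>v z = 0\<^sub>v n"
    unfolding z_def using fundamental y T_lim_carrier lim_y
    by (simp add: assoc_mult_mat_vec[of _ n n _ n, symmetric] T_lim_mult_fundamental)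
  ultimately have "y = z - T *\<^sub>v z" using shifted_mult_vec[OF z] z T_carrier by simp
  then have Tz: "T *\<^sub>v z = z - y"
    using z T_carrier by (intro eq_vecI) (auto dest!: arg_cong[of _ _ "\<lambda>w. w $ _"])
  have bound: "y $ i + (T ^\<^sub>m Suc N *\<^sub>v z) $ i \<le> z $ i" for N
    by (rule excessive_pow_bound[OF T_carrier T_nonneg z y y_nonneg Tz i])
  have "(\<lambda>N. y $ i + (T ^\<^sub>m Suc N *\<^sub>v z) $ i) \<longlonglongrightarrow> y $ i + (T_lim *\<^sub>v z) $ i"
    using mat_tendsto_mult_vec[OF pow_carrier_mat[OF T_carrier] z T_lim_carrier
        mat_tendsto_Suc[OF pow_tendsto_T_lim] i]
    by (intro tendsto_intros)
  then have "y $ i \<le> z $ i" using LIMSEQ_le_const2 bound lim_z i by fastforce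
  moreover have "P_sharp *\<^sub>v y = z - T_lim *\<^sub>v y"
    unfolding P_sharp_def z_def using fundamental T_lim_carrier y
    by (simp add: minus_mult_distrib_mat_vec[of _ n n])
  ultimately show ?thesis using lim_y i z by simp
qed

end

section \<open>Diagonal rescaling\<close>

lemma id_minus_mult_mat:
  fixes X :: "'a :: ring_1 mat"
  assumes "X \<in> carrier_mat n n" "Y \<in> carrier_mat n nc"
  shows "(1\<^sub>m n - X) * Y = Y - X * Y"
  using assms by (simp add: minus_mult_distrib_mat[OF one_carrier_mat assms])

lemma mult_id_minus_mat:
  fixes X :: "'a :: ring_1 mat"
  assumes "X \<in> carrier_mat n n" "Y \<in> carrier_mat nr n"
  shows "Y * (1\<^sub>m n - X) = Y - Y * X"
  using assms by (simp add: mult_minus_distrib_mat[OF assms(2) one_carrier_mat assms(1)])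

lemma dim_mat_diag [simp]: "dim_row (mat_diag n f) = n" "dim_col (mat_diag n f) = n"
  by (simp_all add: mat_diag_def)

lemma mat_diag_inverse_commute:
  fixes w :: "nat \<Rightarrow> 'a :: field"
  assumes M: "M \<in> carrier_mat n n" and w: "\<And>i. w i \<noteq> 0"
    and comm: "mat_diag n w * M = M * mat_diag n w"
  shows "mat_diag n (\<lambda>i. 1 / w i) * M = M * mat_diag n (\<lambda>i. 1 / w i)"
proof -
  have "w i * M $$ (i,j) = M $$ (i,j) * w j" if "i < n" "j < n" for i j
    using arg_cong[OF comm, of "\<lambda>X. X $$ (i,j)"] that M
    by (simp add: mat_diag_mult_left[OF M] mat_diag_mult_right[OF M])
  then show ?thesis
    using M w by (auto simp: mat_diag_mult_left[OF M] mat_diag_mult_right[OF M] field_simps)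
qed

lemma index_mat_diag_mult_vec:
  assumes x: "x \<in> carrier_vec n" and i: "i < n"
  shows "(mat_diag n f *\<^sub>v x) $ i = f i * x $ i"
proof -
  have "(mat_diag n f *\<^sub>v x) $ i = (\<Sum>l<n. if l = i then f i * x $ i else 0)"
    unfolding index_mult_mat_vec_sum[OF mat_diag_dim x i]
    by (rule sum.cong) (use i in \<open>auto simp: mat_diag_def\<close>)
  then show ?thesis using i by simp
qed

lemma nonneg_mat_diag: "(\<And>i. 0 \<le> f i) \<Longrightarrow> nonneg_mat (mat_diag n f)"
  by (simp add: nonneg_mat_def mat_diag_def)

lemma scalar_prod_mat_diag_pos:
  fixes x :: "real vec"
  assumes f: "\<And>i. 0 < f i" and x: "x \<in> carrier_vec n" "x \<noteq> 0\<^sub>v n"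
  shows "0 < x \<bullet> (mat_diag n f *\<^sub>v x)"
proof -
  obtain i where i: "i < n" "x $ i \<noteq> 0"
    using x by (metis carrier_vecD eq_vecI index_zero_vec)
  have "0 < x $ i * x $ i" using i(2) by (metis not_real_square_gt_zero)
  then have "0 < f i * (x $ i * x $ i)" using f[of i] by simp
  also have "\<dots> \<le> (\<Sum>l\<in>{0..<n}. f l * (x $ l * x $ l))"
    by (rule member_le_sum) (use i in \<open>auto intro: mult_nonneg_nonneg[OF less_imp_le[OF f] zero_le_square]\<close>)
  also have "\<dots> = (\<Sum>l\<in>{0..<n}. x $ l * (mat_diag n f *\<^sub>v x) $ l)"
    by (rule sum.cong) (simp_all add: index_mat_diag_mult_vec[OF x(1)] del: index_mult_mat_vec)
  also have "\<dots> = x \<bullet> (mat_diag n f *\<^sub>v x)"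
    by (simp only: scalar_prod_def dim_mult_mat_vec dim_mat_diag)
  finally show ?thesis .
qed

locale scaled_nonneg_semiconvergent = nonneg_semiconvergent +
  fixes w :: "nat \<Rightarrow> real"
  assumes w_pos: "\<And>i. 0 < w i"
    and w_commute: "mat_diag n w * T = T * mat_diag n w"
begin

abbreviation S :: "real mat" where "S \<equiv> mat_diag n w"
abbreviation S_inv :: "real mat" where "S_inv \<equiv> mat_diag n (\<lambda>i. 1 / w i)"

lemma w_nonzero [simp]: "w i \<noteq> 0"
  using w_pos[of i] by simp

lemma carrier_facts:
  "1\<^sub>m n - T \<in> carrier_mat n n" "1\<^sub>m n - T_lim \<in> carrier_mat n n"
  "T \<in> carrier_mat n n" "T_lim \<in> carrier_mat n n" "P_sharp \<in> carrier_mat n n"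
  using T_carrier T_lim_carrier P_sharp_carrier by (simp_all add: minus_carrier_mat)

definition A_sharp :: "real mat" where
  "A_sharp = P_sharp * S_inv"

lemma A_sharp_carrier: "A_sharp \<in> carrier_mat n n"
  unfolding A_sharp_def using P_sharp_carrier by simp

lemma S_commute_id_minus_T_lim: "S * (1\<^sub>m n - T_lim) = (1\<^sub>m n - T_lim) * S"
  using T_lim_carrier commute_T_lim[OF mat_diag_dim w_commute]
  by (simp add: id_minus_mult_mat[OF T_lim_carrier mat_diag_dim]
      mult_id_minus_mat[OF T_lim_carrier mat_diag_dim])

lemma S_inv_commute_T_lim: "S_inv * T_lim = T_lim * S_inv"
  using mat_diag_inverse_commute[OF T_carrier _ w_commute] by (intro commute_T_lim) auto

lemma scaled_mult_A_sharp: "S * (1\<^sub>m n - T) * A_sharp = 1\<^sub>m n - T_lim"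
proof -
  note assoc = assoc_mult_mat[of _ n n _ n _ n] and closed = mult_carrier_mat[of _ n n]
  have "S * (1\<^sub>m n - T) * A_sharp = S * ((1\<^sub>m n - T) * P_sharp) * S_inv"
    unfolding A_sharp_def using carrier_facts by (simp add: assoc closed)
  also have "\<dots> = (1\<^sub>m n - T_lim) * (S * S_inv)"
    using carrier_facts by (simp add: id_minus_T_mult_P_sharp S_commute_id_minus_T_lim assoc closed)
  finally show ?thesis using carrier_facts by simp
qed

lemma A_sharp_mult_scaled: "A_sharp * (S * (1\<^sub>m n - T)) = 1\<^sub>m n - T_lim"
proof -
  note assoc = assoc_mult_mat[of _ n n _ n _ n] and closed = mult_carrier_mat[of _ n n]
  have "A_sharp * (S * (1\<^sub>m n - T)) = P_sharp * (S_inv * S) * (1\<^sub>m n - T)"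
    unfolding A_sharp_def using carrier_facts by (simp add: assoc closed del: mat_diag_diag)
  then show ?thesis using carrier_facts by (simp add: P_sharp_mult_id_minus_T)
qed

lemma group_inverse_scaled: "group_inverse (S * (1\<^sub>m n - T)) A_sharp"
proof -
  note assoc = assoc_mult_mat[of _ n n _ n _ n] and closed = mult_carrier_mat[of _ n n]
  have "(1\<^sub>m n - T_lim) * (S * (1\<^sub>m n - T)) = S * (1\<^sub>m n - T_lim) * (1\<^sub>m n - T)"
    using carrier_facts by (simp add: assoc[symmetric] closed S_commute_id_minus_T_lim)
  also have "\<dots> = S * ((1\<^sub>m n - T_lim) * (1\<^sub>m n - T))"
    using carrier_facts by (simp add: assoc closed)
  also have "(1\<^sub>m n - T_lim) * (1\<^sub>m n - T) = 1\<^sub>m n - T"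
    using carrier_facts by (simp add: id_minus_mult_mat T_lim_mult_id_minus_T)
  finally have "S * (1\<^sub>m n - T) * A_sharp * (S * (1\<^sub>m n - T)) = S * (1\<^sub>m n - T)"
    by (simp add: scaled_mult_A_sharp)
  moreover have "(1\<^sub>m n - T_lim) * A_sharp = A_sharp"
    unfolding A_sharp_def using carrier_facts
    by (simp add: id_minus_mult_mat assoc[symmetric] closed T_lim_mult_P_sharp)
  ultimately show ?thesis
    unfolding group_inverse_def
    using carrier_facts A_sharp_carrier scaled_mult_A_sharp A_sharp_mult_scaled
    by (simp add: assoc closed)
qed

text \<open>For \<open>x = A_sharp *\<^sub>v u \<ge> 0\<close> put \<open>y = S_inv *\<^sub>v x \<ge> 0\<close>; then \<open>T_lim *\<^sub>v y = 0\<close>, so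
  \<open>x \<bullet> (A_sharp *\<^sub>v x) = x \<bullet> (P_sharp *\<^sub>v y) \<ge> x \<bullet> y > 0\<close>.\<close>

lemma A_sharp_strictly_copositive:
  assumes xK: "x \<in> K_cone n A_sharp" and x0: "x \<noteq> 0\<^sub>v n"
  shows "0 < x \<bullet> (A_sharp *\<^sub>v x)"
proof -
  obtain u where u: "u \<in> carrier_vec n" and xu: "x = A_sharp *\<^sub>v u"
    and x: "x \<in> carrier_vec n" and x_nonneg: "nonneg_vec x"
    using xK unfolding K_cone_def range_mat_def by auto
  have "T_lim *\<^sub>v x = (T_lim * P_sharp) *\<^sub>v (S_inv *\<^sub>v u)"
    unfolding xu A_sharp_def using carrier_facts u
    by (simp add: assoc_mult_mat_vec[of _ n n _ n] mult_mat_vec_carrier[of _ n n])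
  then have lim_x: "T_lim *\<^sub>v x = 0\<^sub>v n" using u by (simp add: T_lim_mult_P_sharp mult_mat_vec_carrier[of _ n n])
  define y where "y = S_inv *\<^sub>v x"
  have y: "y \<in> carrier_vec n" unfolding y_def by (rule mult_mat_vec_carrier[OF mat_diag_dim x])
  have y_nonneg: "nonneg_vec y"
    unfolding y_def using x x_nonneg w_pos
    by (intro nonneg_vec_mult_mat_vec[OF mat_diag_dim] nonneg_mat_diag) (auto intro: less_imp_le)
  have "T_lim *\<^sub>v y = S_inv *\<^sub>v (T_lim *\<^sub>v x)"
    unfolding y_def using x carrier_facts
    by (simp add: assoc_mult_mat_vec[of _ n n _ n, symmetric] S_inv_commute_T_lim)
  then have lim_y: "T_lim *\<^sub>v y = 0\<^sub>v n" using lim_x by simp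
  have "0 < x \<bullet> y"
    unfolding y_def using scalar_prod_mat_diag_pos[OF _ x x0] w_pos by simp
  also have "x \<bullet> y \<le> x \<bullet> (P_sharp *\<^sub>v y)"
    unfolding scalar_prod_def using x y P_sharp_carrier x_nonneg le_P_sharp_mult_vec[OF y y_nonneg lim_y]
    by (auto intro!: sum_mono mult_left_mono simp: nonneg_vec_def)
  also have "P_sharp *\<^sub>v y = A_sharp *\<^sub>v x"
    unfolding y_def A_sharp_def using x carrier_facts by (simp add: assoc_mult_mat_vec[of _ n n _ n])
  finally show ?thesis .
qed

lemma unit_vec_in_K_cone:
  assumes j: "j < n" and col: "\<And>i. i < n \<Longrightarrow> (\<lambda>k. (T ^\<^sub>m k) $$ (i,j)) \<longlonglongrightarrow> 0"
  shows "unit_vec n j \<in> K_cone n A_sharp"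
proof -
  have lim_e: "T_lim *\<^sub>v unit_vec n j = 0\<^sub>v n"
    using T_lim_carrier T_lim_pow_column_zero[OF j col] j by (intro eq_vecI) auto
  have "A_sharp *\<^sub>v (S * (1\<^sub>m n - T) *\<^sub>v unit_vec n j) = (A_sharp * (S * (1\<^sub>m n - T))) *\<^sub>v unit_vec n j"
    by (rule assoc_mult_mat_vec[symmetric, OF A_sharp_carrier mult_carrier_mat[OF mat_diag_dim carrier_facts(1)]])
      simp
  also have "\<dots> = unit_vec n j"
    by (simp add: A_sharp_mult_scaled minus_mult_distrib_mat_vec[OF one_carrier_mat T_lim_carrier] lim_e)
  finally have "unit_vec n j = A_sharp *\<^sub>v (S * (1\<^sub>m n - T) *\<^sub>v unit_vec n j)" ..
  moreover have "S * (1\<^sub>m n - T) *\<^sub>v unit_vec n j \<in> carrier_vec n"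
    using mult_carrier_mat[OF mat_diag_dim carrier_facts(1)] by (rule mult_mat_vec_carrier) simp
  ultimately have "unit_vec n j \<in> range_mat n A_sharp"
    unfolding range_mat_def by blast
  then show ?thesis unfolding K_cone_def nonneg_vec_def using j by simp
qed

lemma Karamardian_A_sharp:
  assumes "j < n" "\<And>i. i < n \<Longrightarrow> (\<lambda>k. (T ^\<^sub>m k) $$ (i,j)) \<longlonglongrightarrow> 0"
  shows "Karamardian n A_sharp"
  using unit_vec_in_K_cone[OF assms] unit_vec_nonzero[OF assms(1)]
  by (intro Karamardian_if_strictly_copositive[OF A_sharp_carrier] A_sharp_strictly_copositive) auto

end

section \<open>Spectral radius\<close>

lemma det_nonzero_if_invertible_mat:
  fixes A :: "'a :: comm_ring_1 mat"
  assumes "invertible_mat A" "A \<in> carrier_mat n n"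
  shows "det A \<noteq> 0"
proof -
  obtain B where AB: "A * B = 1\<^sub>m n" and BA: "B * A = 1\<^sub>m (dim_row B)"
    using assms unfolding invertible_mat_def inverts_mat_def by auto
  have "B \<in> carrier_mat n n"
    using arg_cong[OF AB, of dim_col] arg_cong[OF BA, of dim_col] assms(2) by auto
  then show ?thesis
    using AB BA assms(2) by (intro unit_imp_det_non_zero[of _ n "()"]) (auto simp: Units_def ring_mat_def)
qed

lemma eigenvalue_affine:
  fixes A :: "'a :: field mat"
  assumes A: "A \<in> carrier_mat n n" and a: "a \<noteq> 0"
  shows "eigenvalue (a \<cdot>\<^sub>m A + b \<cdot>\<^sub>m 1\<^sub>m n) \<mu> \<longleftrightarrow> eigenvalue A ((\<mu> - b) / a)"
proof -
  have "char_matrix (a \<cdot>\<^sub>m A + b \<cdot>\<^sub>m 1\<^sub>m n) \<mu> = a \<cdot>\<^sub>m char_matrix A ((\<mu> - b) / a)"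
    using A a by (intro eq_matI) (auto simp: char_matrix_def field_simps)
  then show ?thesis
    using A a by (simp add: eigenvalue_det[of _ n])
qed

lemma eigenvalue_smult:
  fixes A :: "'a :: field mat"
  assumes "A \<in> carrier_mat n n" "a \<noteq> 0"
  shows "eigenvalue (a \<cdot>\<^sub>m A) \<mu> \<longleftrightarrow> eigenvalue A (\<mu> / a)"
proof -
  have "a \<cdot>\<^sub>m A = a \<cdot>\<^sub>m A + 0 \<cdot>\<^sub>m 1\<^sub>m n" using assms by (intro eq_matI) auto
  then show ?thesis using eigenvalue_affine[OF assms, of 0] by simp
qed

lemma norm_le_spectral_radius:
  assumes "A \<in> carrier_mat n n" "eigenvalue A \<mu>"
  shows "cmod \<mu> \<le> spectral_radius A"
  using assms spectral_radius_mem_max(2)[OF assms(1) eigenvalue_imp_nonzero_dim[OF assms]]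
  by (auto simp: spectrum_def)

lemma spectral_radius_less:
  assumes A: "A \<in> carrier_mat n n" and n: "0 < n" and ev: "\<And>\<mu>. eigenvalue A \<mu> \<Longrightarrow> cmod \<mu> < c"
  shows "spectral_radius A < c"
  using spectral_radius_mem_max(1)[OF A n] ev by (auto simp: spectrum_def)

lemma spectral_radius_nonneg:
  assumes "A \<in> carrier_mat n n" "0 < n"
  shows "0 \<le> spectral_radius A"
  using spectral_radius_mem_max(1)[OF assms] by auto

lemma rho_nonneg: "E \<in> carrier_mat n n \<Longrightarrow> 0 < n \<Longrightarrow> 0 \<le> rho E"
  unfolding rho_def by (rule spectral_radius_nonneg) simp_all

lemma pow_smult_mat:
  fixes A :: "'a :: comm_ring_1 mat"
  assumes "A \<in> carrier_mat n n"
  shows "(a \<cdot>\<^sub>m A) ^\<^sub>m k = a ^ k \<cdot>\<^sub>m A ^\<^sub>m k"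
proof (induction k)
  case 0
  then show ?case using assms by (intro eq_matI) auto
next
  case (Suc k)
  then have "(a \<cdot>\<^sub>m A) ^\<^sub>m Suc k = a \<cdot>\<^sub>m (a ^ k \<cdot>\<^sub>m (A ^\<^sub>m k * A))"
    using assms by (simp add: mult_smult_assoc_mat[of _ n n] mult_smult_distrib[of _ n n])
  also have "\<dots> = a ^ Suc k \<cdot>\<^sub>m A ^\<^sub>m Suc k"
    by (intro eq_matI) (auto simp: ac_simps)
  finally show ?case .
qed

text \<open>Rescaling \<open>A\<close> by a radius \<open>r\<close> strictly between \<open>spectral_radius A\<close> and \<open>1\<close> gives a
  matrix with bounded powers, so the powers of \<open>A\<close> decay like \<open>r ^ N\<close>.\<close>

lemma pow_tendsto_zero_if_spectral_radius_less_1: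
  fixes A :: "complex mat"
  assumes A: "A \<in> carrier_mat n n" and sr: "spectral_radius A < 1" and ij: "i < n" "j < n"
  shows "(\<lambda>N. (A ^\<^sub>m N) $$ (i,j)) \<longlonglongrightarrow> 0"
proof -
  have n: "0 < n" using ij by simp
  define r where "r = (spectral_radius A + 1) / 2"
  have r: "0 < r" "r < 1" "spectral_radius A < r"
    using sr spectral_radius_nonneg[OF A n] unfolding r_def by auto
  define U where "U = complex_of_real (1 / r) \<cdot>\<^sub>m A"
  have U: "U \<in> carrier_mat n n" unfolding U_def using A by simp
  have "spectral_radius U < 1"
  proof (rule spectral_radius_less[OF U n])
    fix \<mu> assume "eigenvalue U \<mu>"
    then have "eigenvalue A (complex_of_real r * \<mu>)"
      unfolding U_def using eigenvalue_smult[OF A, of "complex_of_real (1 / r)"] r(1)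
      by (simp add: field_simps)
    then have "cmod (complex_of_real r * \<mu>) < r"
      using norm_le_spectral_radius[OF A] r(3) by fastforce
    then have "r * cmod \<mu> < r"
      using r(1) by (simp add: norm_mult)
    then show "cmod \<mu> < 1" using r(1) by simp
  qed
  then obtain c where c: "\<And>N. norm_bound (U ^\<^sub>m N) c"
    using spectral_radius_jnf_norm_bound_less_1_upper_triangular[OF U] by auto
  have "norm ((A ^\<^sub>m N) $$ (i,j)) \<le> norm (r ^ N) * c" for N
  proof -
    have "A = complex_of_real r \<cdot>\<^sub>m U" unfolding U_def using r(1) by (intro eq_matI) auto
    then have "(A ^\<^sub>m N) $$ (i,j) = complex_of_real r ^ N * (U ^\<^sub>m N) $$ (i,j)"
      using U ij by (simp add: pow_smult_mat[OF U])
    then show ?thesis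
      using c[of N] U ij r(1) unfolding norm_bound_def
      by (simp add: norm_mult norm_power mult_left_mono)
  qed
  moreover have "(\<lambda>N. r ^ N) \<longlonglongrightarrow> 0"
    using r by (intro LIMSEQ_power_zero) auto
  ultimately show ?thesis
    using tendsto_0_le always_eventually by (metis (no_types, lifting))
qed

lemma pow_tendsto_zero_if_rho_less_1:
  assumes T: "T \<in> carrier_mat n n" and "rho T < 1" "i < n" "j < n"
  shows "(\<lambda>N. (T ^\<^sub>m N) $$ (i,j)) \<longlonglongrightarrow> 0"
proof -
  have "(\<lambda>N. (map_mat complex_of_real T ^\<^sub>m N) $$ (i,j)) \<longlonglongrightarrow> 0"
    using assms unfolding rho_def by (intro pow_tendsto_zero_if_spectral_radius_less_1) auto
  moreover have "(map_mat complex_of_real T ^\<^sub>m N) $$ (i,j) = complex_of_real ((T ^\<^sub>m N) $$ (i,j))" for N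
    using assms by (simp add: of_real_hom.mat_hom_pow[OF T, symmetric])
  ultimately show ?thesis
    using tendsto_of_real_iff[where 'a = complex, of "\<lambda>N. (T ^\<^sub>m N) $$ (i,j)" 0 sequentially] by simp
qed

lemma norm_add_one_eq_imp_real:
  fixes z :: complex
  assumes "cmod (z + 1) = cmod z + 1"
  shows "z = complex_of_real (cmod z)"
proof -
  have "(cmod z + 1)\<^sup>2 = (Re z + 1)\<^sup>2 + (Im z)\<^sup>2"
    using assms by (simp add: cmod_power2 flip: assms)
  moreover have "(cmod z)\<^sup>2 = (Re z)\<^sup>2 + (Im z)\<^sup>2" by (simp add: cmod_power2)
  ultimately have re: "Re z = cmod z" by (simp add: power2_eq_square algebra_simps)
  then have "Im z = 0" using cmod_power2[of z] by simp
  then show ?thesis using re by (simp add: complex_eq_iff)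
qed

lemma not_eigenvalue_if_invertible:
  fixes E :: "real mat"
  assumes E: "E \<in> carrier_mat k k" and inv: "invertible_mat (t \<cdot>\<^sub>m 1\<^sub>m k - E)"
  shows "\<not> eigenvalue (map_mat complex_of_real E) (complex_of_real t)"
proof
  let ?cm = "map_mat complex_of_real"
  assume "eigenvalue (?cm E) (complex_of_real t)"
  then have "det (char_matrix (?cm E) (complex_of_real t)) = 0"
    using eigenvalue_det[of "?cm E" k] E by simp
  moreover have "char_matrix (?cm E) (complex_of_real t) = (- 1) \<cdot>\<^sub>m ?cm (t \<cdot>\<^sub>m 1\<^sub>m k - E)"
    using E by (intro eq_matI) (auto simp: char_matrix_def)
  ultimately show False
    using det_nonzero_if_invertible_mat[OF inv minus_carrier_mat[OF E]] E by simp
qed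

lemma eigenvalue_of_shifted:
  fixes E :: "real mat"
  assumes E: "E \<in> carrier_mat k k" and c: "c \<noteq> 0"
    and ev: "eigenvalue (map_mat complex_of_real ((1 / c) \<cdot>\<^sub>m (E + 1\<^sub>m k))) \<mu>"
  shows "eigenvalue (map_mat complex_of_real E) (complex_of_real c * \<mu> - 1)"
proof -
  let ?c = "complex_of_real c"
  have cE: "map_mat complex_of_real E \<in> carrier_mat k k" using E by simp
  have "map_mat complex_of_real ((1 / c) \<cdot>\<^sub>m (E + 1\<^sub>m k))
      = (1 / ?c) \<cdot>\<^sub>m map_mat complex_of_real E + (1 / ?c) \<cdot>\<^sub>m 1\<^sub>m k"
    using E by (intro eq_matI) (auto simp: distrib_left)
  then have "eigenvalue (map_mat complex_of_real E) ((\<mu> - 1 / ?c) / (1 / ?c))"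
    using ev eigenvalue_affine[OF cE] c by simp
  moreover have "(\<mu> - 1 / ?c) / (1 / ?c) = ?c * \<mu> - 1" using c by (simp add: field_simps)
  ultimately show ?thesis by simp
qed

text \<open>An eigenvalue \<open>\<mu>\<close> of \<open>(E + 1) / (t + 1)\<close> comes from the eigenvalue \<open>\<lambda> = (t + 1) \<mu> - 1\<close>
  of \<open>E\<close>, with \<open>|\<lambda>| \<le> t\<close>; so \<open>|\<mu>| \<le> 1\<close>, and \<open>|\<mu>| = 1\<close> would force \<open>\<lambda> = t\<close>, which the
  invertibility of \<open>t - E\<close> excludes.\<close>

lemma rho_shifted_less_1:
  fixes E :: "real mat"
  assumes E: "E \<in> carrier_mat k k" and k: "0 < k" and t: "rho E \<le> t"
    and inv: "invertible_mat (t \<cdot>\<^sub>m 1\<^sub>m k - E)"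
  shows "rho ((1 / (t + 1)) \<cdot>\<^sub>m (E + 1\<^sub>m k)) < 1"
  unfolding rho_def
proof (rule spectral_radius_less[OF _ k])
  let ?cm = "map_mat complex_of_real"
  have t0: "0 \<le> t" using t rho_nonneg[OF E k] by simp
  fix \<mu> assume ev_\<mu>: "eigenvalue (?cm ((1 / (t + 1)) \<cdot>\<^sub>m (E + 1\<^sub>m k))) \<mu>"
  define lam where "lam = complex_of_real (t + 1) * \<mu> - 1"
  have ev: "eigenvalue (?cm E) lam"
    unfolding lam_def using ev_\<mu> t0 by (intro eigenvalue_of_shifted[OF E]) simp_all
  then have lam_le: "cmod lam \<le> t"
    using norm_le_spectral_radius[of "?cm E" k] E t unfolding rho_def by fastforce
  have lam_add: "(t + 1) * cmod \<mu> = cmod (lam + 1)"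
    unfolding lam_def using t0 by (simp add: norm_mult)
  also have "\<dots> \<le> cmod lam + 1"
    using norm_triangle_ineq[of lam 1] by simp
  finally have le: "(t + 1) * cmod \<mu> \<le> t + 1" using lam_le by simp
  show "cmod \<mu> < 1"
  proof (rule ccontr)
    assume "\<not> cmod \<mu> < 1"
    then have "cmod \<mu> = 1" using le t0 by (simp add: mult_le_cancel_left1)
    then have "cmod (lam + 1) = cmod lam + 1" "cmod lam = t"
      using lam_add lam_le norm_triangle_ineq[of lam 1] by auto
    then have "lam = complex_of_real t" using norm_add_one_eq_imp_real by metis
    then show False using not_eigenvalue_if_invertible[OF E inv] ev by simp
  qed
qed (use E in simp)

section \<open>Block diagonal matrices\<close>

lemma index_four_block_diag:
  assumes "X \<in> carrier_mat m m" "Y \<in> carrier_mat k k" "i < m + k" "j < m + k"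
  shows "four_block_mat X (0\<^sub>m m k) (0\<^sub>m k m) Y $$ (i,j) =
    (if i < m then if j < m then X $$ (i,j) else 0 else if j < m then 0 else Y $$ (i - m, j - m))"
  using assms by simp

lemma nonneg_mat_four_block_diag:
  assumes "X \<in> carrier_mat m m" "Y \<in> carrier_mat k k" "nonneg_mat X" "nonneg_mat Y"
  shows "nonneg_mat (four_block_mat X (0\<^sub>m m k) (0\<^sub>m k m) Y)"
  using assms by (auto simp: nonneg_mat_def)

lemma semi_convergent_four_block_diag:
  assumes X: "X \<in> carrier_mat m m" and Y: "Y \<in> carrier_mat k k"
    and "semi_convergent m X" "semi_convergent k Y"
  shows "semi_convergent (m + k) (four_block_mat X (0\<^sub>m m k) (0\<^sub>m k m) Y)"
  unfolding semi_convergent_def pow_four_block_mat[OF X Y]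
proof (intro allI impI)
  fix i j assume ij: "i < m + k" "j < m + k"
  then show "convergent (\<lambda>N. four_block_mat (X ^\<^sub>m N) (0\<^sub>m m k) (0\<^sub>m k m) (Y ^\<^sub>m N) $$ (i,j))"
    unfolding index_four_block_diag[OF pow_carrier_mat[OF X] pow_carrier_mat[OF Y] ij]
    using assms(3,4) ij unfolding semi_convergent_def
    by (cases "i < m"; cases "j < m") (auto simp: convergent_const)
qed

lemma four_block_diag_pow_column_tendsto_zero:
  assumes X: "X \<in> carrier_mat m m" and Y: "Y \<in> carrier_mat k k"
    and j: "j < k" and col: "\<And>i. i < k \<Longrightarrow> (\<lambda>N. (Y ^\<^sub>m N) $$ (i,j)) \<longlonglongrightarrow> 0"
    and i: "i < m + k"
  shows "(\<lambda>N. (four_block_mat X (0\<^sub>m m k) (0\<^sub>m k m) Y ^\<^sub>m N) $$ (i, m + j)) \<longlonglongrightarrow> 0"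
proof -
  have mj: "m + j < m + k" using j by simp
  show ?thesis
    unfolding pow_four_block_mat[OF X Y]
      index_four_block_diag[OF pow_carrier_mat[OF X] pow_carrier_mat[OF Y] i mj]
    using i col by (cases "i < m") auto
qed

lemma mat_diag_commute_four_block_diag:
  fixes X Y :: "'a :: comm_ring_1 mat"
  assumes "X \<in> carrier_mat m m" "Y \<in> carrier_mat k k"
  shows "mat_diag (m + k) (\<lambda>i. if i < m then a else b) * four_block_mat X (0\<^sub>m m k) (0\<^sub>m k m) Y
       = four_block_mat X (0\<^sub>m m k) (0\<^sub>m k m) Y * mat_diag (m + k) (\<lambda>i. if i < m then a else b)"
  using assms
  by (subst mat_diag_mult_left[of _ "m + k" "m + k"], simp,
      subst mat_diag_mult_right[of _ "m + k" "m + k"], simp)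
    (intro eq_matI, auto simp: index_four_block_diag[OF assms] mult.commute)

lemma mat_diag_mult_id_minus_four_block_diag:
  fixes X Y :: "'a :: comm_ring_1 mat"
  assumes "X \<in> carrier_mat m m" "Y \<in> carrier_mat k k"
  shows "mat_diag (m + k) (\<lambda>i. if i < m then a else b) * (1\<^sub>m (m + k) - four_block_mat X (0\<^sub>m m k) (0\<^sub>m k m) Y)
       = four_block_mat (a \<cdot>\<^sub>m (1\<^sub>m m - X)) (0\<^sub>m m k) (0\<^sub>m k m) (b \<cdot>\<^sub>m (1\<^sub>m k - Y))"
proof (subst mat_diag_mult_left[of _ "m + k" "m + k"])
  show "1\<^sub>m (m + k) - four_block_mat X (0\<^sub>m m k) (0\<^sub>m k m) Y \<in> carrier_mat (m + k) (m + k)"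
    using assms by (simp add: minus_carrier_mat)
  have one: "1\<^sub>m (m + k) $$ (i,j) = (if i < m then if j < m then 1\<^sub>m m $$ (i,j) else 0
      else if j < m then 0 else 1\<^sub>m k $$ (i - m, j - m))" if "i < m + k" "j < m + k" for i j
    using that by auto
  show "mat (m + k) (m + k) (\<lambda>(i,j). (if i < m then a else b) *
        (1\<^sub>m (m + k) - four_block_mat X (0\<^sub>m m k) (0\<^sub>m k m) Y) $$ (i,j))
      = four_block_mat (a \<cdot>\<^sub>m (1\<^sub>m m - X)) (0\<^sub>m m k) (0\<^sub>m k m) (b \<cdot>\<^sub>m (1\<^sub>m k - Y))"
    using assms
    by (intro eq_matI) (auto simp: index_four_block_diag[OF assms] one minus_carrier_mat simp del: index_one_mat)
qed

lemma property_c_factor: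
  assumes "property_c m B"
  shows "\<exists>s T. 0 < s \<and> T \<in> carrier_mat m m \<and> nonneg_mat T \<and> semi_convergent m T
           \<and> B = s \<cdot>\<^sub>m (1\<^sub>m m - T)"
proof -
  obtain s D where s: "0 < s" and D: "D \<in> carrier_mat m m" "nonneg_mat D"
    and B: "B = s \<cdot>\<^sub>m 1\<^sub>m m - D" and sc: "semi_convergent m ((1 / s) \<cdot>\<^sub>m D)"
    using assms unfolding property_c_def by auto
  have "B = s \<cdot>\<^sub>m (1\<^sub>m m - (1 / s) \<cdot>\<^sub>m D)"
    unfolding B using D s by (intro eq_matI) (auto simp: field_simps)
  moreover have "nonneg_mat ((1 / s) \<cdot>\<^sub>m D)" using D s by (auto simp: nonneg_mat_def)
  ultimately show ?thesis using s D sc by (intro exI[of _ s] exI[of _ "(1 / s) \<cdot>\<^sub>m D"]) auto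
qed

lemma invertible_M_matrix_factor:
  assumes k: "0 < k" and C: "invertible_M_matrix k C"
  shows "\<exists>s T. 0 < s \<and> T \<in> carrier_mat k k \<and> nonneg_mat T
           \<and> (\<forall>i<k. \<forall>j<k. (\<lambda>N. (T ^\<^sub>m N) $$ (i,j)) \<longlonglongrightarrow> 0) \<and> C = s \<cdot>\<^sub>m (1\<^sub>m k - T)"
proof -
  obtain t E where E: "E \<in> carrier_mat k k" "nonneg_mat E" and rho_E: "rho E \<le> t"
    and C_eq: "C = t \<cdot>\<^sub>m 1\<^sub>m k - E" and inv: "invertible_mat C"
    using C unfolding invertible_M_matrix_def M_matrix_def by auto
  have t: "0 \<le> t" using rho_E rho_nonneg[OF E(1) k] by simp
  define T where "T = (1 / (t + 1)) \<cdot>\<^sub>m (E + 1\<^sub>m k)"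
  have T: "T \<in> carrier_mat k k" unfolding T_def using E by simp
  have "C = (t + 1) \<cdot>\<^sub>m (1\<^sub>m k - T)"
    unfolding C_eq T_def using E t by (intro eq_matI) (auto simp: field_simps)
  moreover have "nonneg_mat T" unfolding T_def using E t by (auto simp: nonneg_mat_def)
  moreover have "(\<lambda>N. (T ^\<^sub>m N) $$ (i,j)) \<longlonglongrightarrow> 0" if "i < k" "j < k" for i j
    using pow_tendsto_zero_if_rho_less_1[OF T _ that] rho_shifted_less_1[OF E(1) k rho_E]
      inv C_eq unfolding T_def by simp
  ultimately show ?thesis using t T by (intro exI[of _ "t + 1"] exI[of _ T]) auto
qed

lemma Karamardian_group_inverse_block_diag:
  assumes X: "X \<in> carrier_mat m m" "nonneg_mat X" "semi_convergent m X"
    and Y: "Y \<in> carrier_mat k k" "nonneg_mat Y" "\<And>i j. i < k \<Longrightarrow> j < k \<Longrightarrow> (\<lambda>N. (Y ^\<^sub>m N) $$ (i,j)) \<longlonglongrightarrow> 0"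
    and k: "0 < k" and ab: "0 < a" "0 < b"
  shows "\<exists>G. group_inverse (four_block_mat (a \<cdot>\<^sub>m (1\<^sub>m m - X)) (0\<^sub>m m k) (0\<^sub>m k m) (b \<cdot>\<^sub>m (1\<^sub>m k - Y))) G
             \<and> Karamardian (m + k) G"
proof -
  define T where "T = four_block_mat X (0\<^sub>m m k) (0\<^sub>m k m) Y"
  define w where "w = (\<lambda>i::nat. if i < m then a else b)"
  have "semi_convergent k Y"
    using Y(3) unfolding semi_convergent_def convergent_def by blast
  then interpret scaled_nonneg_semiconvergent "m + k" T w
    unfolding T_def w_def using X Y ab
    by unfold_locales
      (auto simp: nonneg_mat_four_block_diag semi_convergent_four_block_diag mat_diag_commute_four_block_diag)
  have "Karamardian (m + k) A_sharp"
    using Karamardian_A_sharp[of m] four_block_diag_pow_column_tendsto_zero[OF X(1) Y(1) k] k Y(3)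
    unfolding T_def by simp
  then show ?thesis
    using group_inverse_scaled mat_diag_mult_id_minus_four_block_diag[OF X(1) Y(1)]
    unfolding T_def w_def by auto
qed

theorem mainTheorem11:
  fixes B C :: "real mat" and m k :: nat
  assumes "0 < m" and "0 < k"
    and "M_matrix m B" and "property_c m B"
    and "invertible_M_matrix k C"
  defines "A \<equiv> four_block_mat B (0\<^sub>m m k) (0\<^sub>m k m) C"
  shows "(\<exists>X. group_inverse A X) \<and>
         (\<forall>X. group_inverse A X \<longrightarrow> Karamardian (m + k) X)"
proof -
  obtain a X where "0 < a" "X \<in> carrier_mat m m" "nonneg_mat X" "semi_convergent m X"
    and B: "B = a \<cdot>\<^sub>m (1\<^sub>m m - X)"
    using property_c_factor[OF assms(4)] by auto
  moreover obtain b Y where "0 < b" "Y \<in> carrier_mat k k" "nonneg_mat Y"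
    "\<forall>i<k. \<forall>j<k. (\<lambda>N. (Y ^\<^sub>m N) $$ (i,j)) \<longlonglongrightarrow> 0" and C: "C = b \<cdot>\<^sub>m (1\<^sub>m k - Y)"
    using invertible_M_matrix_factor[OF assms(2,5)] by auto
  ultimately obtain G where G: "group_inverse A G" "Karamardian (m + k) G"
    using Karamardian_group_inverse_block_diag[of X m Y k a b] assms(2) unfolding A_def by auto
  have "A \<in> carrier_mat (m + k) (m + k)"
    unfolding A_def B C using \<open>X \<in> carrier_mat m m\<close> \<open>Y \<in> carrier_mat k k\<close> by (simp add: minus_carrier_mat)
  then show ?thesis using G group_inverse_unique by blast
qed

end
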